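(* Let $f:\mathbb{R}^d\to\mathbb{R}$ be differentiable and attain its minimum value $f^*$. Consider the iteration (scaled sign gradient descent) \[ x_{k+1}=x_k-\alpha\|g_k\|_1\operatorname{sign}(g_k),\qquad g_k:=\nabla f(x_k),\qquad k=0,1,2,\ldots, \] with constant learning rate $\alpha>0$ and arbitrary $x_0\in\mathbb{R}^d$. Suppose $f$ is $L$-smooth with respect to the $\ell_\infty$-norm, i.e. $\|\nabla f(x)-\nabla f(y)\|_1\le L\|x-y\|_\infty$ for all $x,y\in\mathbb{R}^d$, for some $L>0$. Then: \begin{enumerate} \item If in addition $f$ is $\mu$-strongly convex with respect to the $\ell_\infty$-norm for some $\mu>0$, i.e. $f(x)-f(y)\ge \nabla f(y)^\top(x-y)+\frac{\mu}{2}\|x-y\|_\infty^2$ for all $x,y$, and $0<\alpha<\frac{2}{L}$, then for all $k\ge 0$, \[ f(x_k)-f^*\le \zeta^k\,(f(x_0)-f^* ),\qquad \zeta:=1-2\mu\alpha\Big(1-\frac{L\alpha}{2}\Big)\in[0,1). \] \item If instead $f$ satisfies the Polyak–Łojasiewicz inequality $\|\nabla f(x)\|_1^2\ge 2\mu(f(x)-f^* )$ for all $x\in\mathbb{R}^d$, for some $\mu>0$, and $0<\alpha<\frac{2}{L}$, then the same bound $f(x_k)-f^*\le \zeta^k(f(x_0)-f^* )$ with the same $\zeta$ holds for all $k\ge0$. \item With only the $\ell_\infty$-smoothness assumption, for all $k\ge 0$, \[ \min_{l\in\{0,1,\ldots,k\}}\|g_l\|_1^2\le \frac{f(x_0)-f^*}{\gamma(k+1)},\qquad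 \gamma:=\alpha\Big(1-\frac{L\alpha}{2}\Big). \] \end{enumerate}
   Context: $\operatorname{sign}$ is applied componentwise; $\|\cdot\|_1$ and $\|\cdot\|_\infty$ denote the $\ell_1$- and $\ell_\infty$-norms on $\mathbb{R}^d$. *)

theory Defs
  imports "HOL-Analysis.Analysis"
begin

text \<open>Vectors in R^d are modelled as real^'n, with d = CARD('n).\<close>

definition norm1 :: "real ^ 'n \<Rightarrow> real" where
  "norm1 x = (\<Sum>i\<in>UNIV. \<bar>x $ i\<bar>)"

definition norminf :: "real ^ 'n \<Rightarrow> real" where
  "norminf x = Max (range (\<lambda>i. \<bar>x $ i\<bar>))"

definition sgnv :: "real ^ 'n \<Rightarrow> real ^ 'n" where
  "sgnv x = (\<chi> i. sgn (x $ i))"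

end

theory Submission
  imports Defs
begin

text \<open>
  By the mean value theorem and Hoelder's inequality \<open>\<bar>a \<bullet> h\<bar> \<le> \<parallel>a\<parallel>\<^sub>1 \<parallel>h\<parallel>\<^sub>\<infinity>\<close>,
  \<open>\<ell>\<^sub>\<infinity>\<close>-smoothness gives the descent inequality
  \<open>f (y + h) \<le> f y + g y \<bullet> h + L/2 \<parallel>h\<parallel>\<^sub>\<infinity>\<^sup>2\<close>. The step \<open>h = -\<alpha> \<parallel>g\<parallel>\<^sub>1 sign g\<close> has
  \<open>g \<bullet> h = -\<alpha> \<parallel>g\<parallel>\<^sub>1\<^sup>2\<close> and \<open>\<parallel>h\<parallel>\<^sub>\<infinity> \<le> \<alpha> \<parallel>g\<parallel>\<^sub>1\<close>, so every iteration decreases \<open>f\<close>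
  by at least \<open>\<gamma> \<parallel>g\<^sub>k\<parallel>\<^sub>1\<^sup>2\<close>. Summing these decreases bounds the smallest gradient;
  under the PL inequality each decrease is a contraction of \<open>f (x\<^sub>k) - f\<^sup>*\<close> by \<open>\<zeta>\<close>.
  Strong convexity implies PL (minimise its quadratic lower bound in \<open>\<parallel>x - y\<parallel>\<^sub>\<infinity>\<close>)
  and, compared with the descent inequality, \<open>\<mu> \<le> L\<close>, which forces \<open>\<zeta> \<ge> 0\<close>.
\<close>

lemma abs_component_le_norminf: "\<bar>h $ i\<bar> \<le> norminf h"
  unfolding norminf_def by (rule Max_ge) auto

lemma norminf_attained: "\<exists>i. norminf h = \<bar>h $ i\<bar>"
proof -
  have "norminf h \<in> range (\<lambda>i. \<bar>h $ i\<bar>)"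
    unfolding norminf_def by (rule Max_in) auto
  then show ?thesis by auto
qed

lemma norminf_nonneg: "0 \<le> norminf h"
  using abs_component_le_norminf abs_ge_zero order_trans by blast

lemma norminf_leI: "(\<And>i. \<bar>h $ i\<bar> \<le> B) \<Longrightarrow> norminf h \<le> B"
  using norminf_attained[of h] by metis

lemma norminf_one [simp]: "norminf (1 :: real ^ 'n) = 1"
  using norminf_attained[of "1 :: real ^ 'n"] by auto

lemma norminf_scaleR: "norminf (c *\<^sub>R h) = \<bar>c\<bar> * norminf h"
proof (rule antisym)
  show "norminf (c *\<^sub>R h) \<le> \<bar>c\<bar> * norminf h"
    by (rule norminf_leI) (simp add: abs_mult mult_left_mono abs_component_le_norminf)
  obtain j where "norminf h = \<bar>h $ j\<bar>"
    using norminf_attained by blast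
  then show "\<bar>c\<bar> * norminf h \<le> norminf (c *\<^sub>R h)"
    using abs_component_le_norminf[of "c *\<^sub>R h" j] by (simp add: abs_mult)
qed

lemma abs_inner_le_norm1_norminf: "\<bar>a \<bullet> h\<bar> \<le> norm1 a * norminf h"
proof -
  have "\<bar>a \<bullet> h\<bar> = \<bar>\<Sum>i\<in>UNIV. a $ i * h $ i\<bar>"
    by (simp add: inner_vec_def)
  also have "\<dots> \<le> (\<Sum>i\<in>UNIV. \<bar>a $ i\<bar> * norminf h)"
    by (rule order_trans[OF sum_abs], rule sum_mono)
       (simp add: abs_mult mult_left_mono abs_component_le_norminf)
  also have "\<dots> = norm1 a * norminf h"
    by (simp add: norm1_def sum_distrib_right)
  finally show ?thesis .
qed

lemma inner_scaleR_sgnv: "a \<bullet> (c *\<^sub>R sgnv a) = c * norm1 a"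
  by (simp add: inner_vec_def sgnv_def norm1_def sum_distrib_left mult.left_commute abs_sgn)

lemma norminf_scaleR_sgnv_le: "norminf (c *\<^sub>R sgnv a) \<le> \<bar>c\<bar>"
  by (rule norminf_leI) (simp add: sgnv_def abs_mult sgn_real_def)

locale linf_smooth =
  fixes f :: "real ^ 'n \<Rightarrow> real" and g :: "real ^ 'n \<Rightarrow> real ^ 'n" and L :: real
  assumes has_gradient: "\<And>y. (f has_derivative (\<lambda>h. g y \<bullet> h)) (at y)"
    and L_nonneg: "0 \<le> L"
    and gradient_lipschitz: "\<And>y z. norm1 (g y - g z) \<le> L * norminf (y - z)"
begin

lemma has_real_derivative_along_line:
  "((\<lambda>t. f (y + t *\<^sub>R h)) has_real_derivative (g (y + t *\<^sub>R h) \<bullet> h)) (at t)"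
proof -
  have "((\<lambda>t. f (y + t *\<^sub>R h)) has_derivative (\<lambda>s. g (y + t *\<^sub>R h) \<bullet> (s *\<^sub>R h))) (at t)"
    by (rule has_derivative_compose[OF _ has_gradient, where f = "\<lambda>t. y + t *\<^sub>R h", simplified])
       (auto intro!: derivative_eq_intros)
  then show ?thesis
    unfolding has_field_derivative_def by (simp add: mult.commute[of _ "g (y + t *\<^sub>R h) \<bullet> h"])
qed

lemma descent_inequality: "f (y + h) \<le> f y + g y \<bullet> h + L / 2 * (norminf h)\<^sup>2"
proof -
  define N where "N = norminf h"
  define \<phi> where "\<phi> t = f (y + t *\<^sub>R h) - t * (g y \<bullet> h) - L / 2 * t\<^sup>2 * N\<^sup>2" for t
  have derivative: "(\<phi> has_real_derivative (g (y + t *\<^sub>R h) \<bullet> h - g y \<bullet> h - L * t * N\<^sup>2)) (at t)" for t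
    unfolding \<phi>_def using has_real_derivative_along_line
    by (auto intro!: derivative_eq_intros simp: power2_eq_square)
  then obtain t where t: "0 < t" "t < 1"
    and mvt: "\<phi> 1 - \<phi> 0 = g (y + t *\<^sub>R h) \<bullet> h - g y \<bullet> h - L * t * N\<^sup>2"
    using MVT2[of 0 1 \<phi>, OF _ derivative] by auto
  have "g (y + t *\<^sub>R h) \<bullet> h - g y \<bullet> h = (g (y + t *\<^sub>R h) - g y) \<bullet> h"
    by (simp add: inner_diff_left)
  also have "\<dots> \<le> norm1 (g (y + t *\<^sub>R h) - g y) * N"
    unfolding N_def using abs_inner_le_norm1_norminf abs_le_D1 by blast
  also have "\<dots> \<le> L * norminf (t *\<^sub>R h) * N"
    using gradient_lipschitz[of "y + t *\<^sub>R h" y] by (simp add: N_def mult_right_mono norminf_nonneg)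
  also have "\<dots> = L * t * N\<^sup>2"
    using t by (simp add: norminf_scaleR N_def power2_eq_square)
  finally have "\<phi> 1 \<le> \<phi> 0"
    using mvt by simp
  then show ?thesis
    unfolding \<phi>_def N_def by simp
qed

lemma sign_step_decrease:
  "f (y - (\<alpha> * norm1 (g y)) *\<^sub>R sgnv (g y)) \<le> f y - \<alpha> * (1 - L * \<alpha> / 2) * (norm1 (g y))\<^sup>2"
proof -
  define n where "n = norm1 (g y)"
  define h where "h = (- (\<alpha> * n)) *\<^sub>R sgnv (g y)"
  have "norminf h \<le> \<bar>\<alpha> * n\<bar>"
    using norminf_scaleR_sgnv_le[of "- (\<alpha> * n)" "g y"] by (simp add: h_def)
  then have "(norminf h)\<^sup>2 \<le> (\<alpha> * n)\<^sup>2"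
    by (metis abs_le_square_iff abs_of_nonneg norminf_nonneg)
  then have "L / 2 * (norminf h)\<^sup>2 \<le> L / 2 * (\<alpha> * n)\<^sup>2"
    using L_nonneg by (intro mult_left_mono) auto
  moreover have "g y \<bullet> h = - (\<alpha> * n) * n"
    unfolding h_def n_def by (rule inner_scaleR_sgnv)
  ultimately have "f (y + h) \<le> f y - \<alpha> * n * n + L / 2 * (\<alpha> * n)\<^sup>2"
    using descent_inequality[of y h] by simp
  then show ?thesis
    unfolding h_def n_def by (simp add: algebra_simps power2_eq_square)
qed

lemma strong_convexity_modulus_le:
  assumes "\<forall>y z. f y - f z \<ge> g z \<bullet> (y - z) + \<mu> / 2 * (norminf (y - z))\<^sup>2"
  shows "\<mu> \<le> L"
  using assms[rule_format, of y "y + 1"] descent_inequality[of y 1] by simp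

end

lemma strong_convexity_imp_PL:
  fixes f :: "real ^ 'n \<Rightarrow> real" and g :: "real ^ 'n \<Rightarrow> real ^ 'n"
  assumes convex: "\<forall>y z. f y - f z \<ge> g z \<bullet> (y - z) + \<mu> / 2 * (norminf (y - z))\<^sup>2"
    and "\<mu> > 0" and "f xs = fstar"
  shows "(norm1 (g y))\<^sup>2 \<ge> 2 * \<mu> * (f y - fstar)"
proof -
  define t where "t = norminf (xs - y)"
  define n where "n = norm1 (g y)"
  have "g y \<bullet> (xs - y) \<ge> - (n * t)"
    using abs_inner_le_norm1_norminf[of "g y" "xs - y"] unfolding n_def t_def by linarith
  then have "fstar - f y \<ge> - (n * t) + \<mu> / 2 * t\<^sup>2"
    using convex[rule_format, of y xs] \<open>f xs = fstar\<close> unfolding t_def by linarith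
  then have "2 * \<mu> * (- (n * t) + \<mu> / 2 * t\<^sup>2) \<le> 2 * \<mu> * (fstar - f y)"
    using \<open>\<mu> > 0\<close> by (intro mult_left_mono) auto
  moreover have "- n\<^sup>2 \<le> 2 * \<mu> * (- (n * t) + \<mu> / 2 * t\<^sup>2)"
    using zero_le_power2[of "\<mu> * t - n"] by (simp add: power2_eq_square algebra_simps)
  ultimately show ?thesis
    unfolding n_def[symmetric] by (simp add: algebra_simps)
qed

lemma step_factor_pos:
  fixes \<alpha> L :: real
  assumes "0 < L" "0 < \<alpha>" "\<alpha> < 2 / L"
  shows "0 < \<alpha> * (1 - L * \<alpha> / 2)"
  using assms by (simp add: field_simps)

lemma contraction_factor_nonneg:
  fixes \<alpha> \<mu> L :: real
  assumes "0 \<le> \<mu>" "\<mu> \<le> L"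
  shows "0 \<le> 1 - 2 * \<mu> * \<alpha> * (1 - L * \<alpha> / 2)"
proof -
  define p where "p = \<alpha> * (2 - L * \<alpha>)"
  \<comment> \<open>\<open>L p = 1 - (1 - L \<alpha>)\<^sup>2\<close>\<close>
  have "L * p \<le> 1"
    using zero_le_power2[of "L * \<alpha> - 1"] by (simp add: p_def power2_eq_square algebra_simps)
  moreover have "\<mu> * p \<le> L * p \<or> p \<le> 0"
    using assms by (auto intro: mult_right_mono)
  ultimately have "\<mu> * p \<le> 1"
    using \<open>0 \<le> \<mu>\<close> by (smt (verit) mult_nonneg_nonpos)
  then show ?thesis
    by (simp add: p_def algebra_simps)
qed

lemma nonneg_contraction_bound:
  fixes a :: "nat \<Rightarrow> real"
  assumes nonneg: "\<And>k. 0 \<le> a k" and contract: "\<And>k. a (Suc k) \<le> \<zeta> * a k"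
  shows "a k \<le> \<zeta> ^ k * a 0"
proof (cases "0 \<le> \<zeta>")
  case True
  show ?thesis
  proof (induction k)
    case (Suc k)
    then show ?case
      using contract[of k] mult_left_mono[OF Suc True] by simp
  qed simp
next
  case False
  \<comment> \<open>a negative factor forces the whole sequence to vanish\<close>
  then have "a (Suc j) = 0" for j
    using contract[of j] nonneg[of j] nonneg[of "Suc j"] by (smt (verit) mult_nonpos_nonneg)
  moreover have "a 0 = 0"
    using contract[of 0] nonneg[of 0] nonneg[of "Suc 0"] False by (smt (verit) mult_neg_pos)
  ultimately show ?thesis
    by (cases k) auto
qed

lemma Min_le_of_sufficient_decrease:
  fixes a b :: "nat \<Rightarrow> real"
  assumes decrease: "\<And>k. a (Suc k) \<le> a k - \<gamma> * b k"
    and lower: "\<And>k. m \<le> a k" and "\<gamma> > 0"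
  shows "Min (b ` {0..k}) \<le> (a 0 - m) / (\<gamma> * real (k + 1))"
proof -
  have telescope: "\<gamma> * (\<Sum>l\<in>{0..j}. b l) \<le> a 0 - a (Suc j)" for j
  proof (induction j)
    case (Suc j)
    then show ?case
      using decrease[of "Suc j"] by (simp add: algebra_simps)
  qed (use decrease[of 0] in simp)
  have "real (k + 1) * Min (b ` {0..k}) = (\<Sum>l\<in>{0..k}. Min (b ` {0..k}))"
    by simp
  also have "\<dots> \<le> (\<Sum>l\<in>{0..k}. b l)"
    by (intro sum_mono Min_le) auto
  finally have "\<gamma> * (real (k + 1) * Min (b ` {0..k})) \<le> a 0 - m"
    using telescope[of k] lower[of "Suc k"] \<open>\<gamma> > 0\<close>
    by (smt (verit) mult_left_mono)
  then show ?thesis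
    using \<open>\<gamma> > 0\<close> by (subst pos_le_divide_eq) (auto simp: mult_ac)
qed

theorem theorem1:
  fixes f :: "real ^ 'n \<Rightarrow> real"
    and g :: "real ^ 'n \<Rightarrow> real ^ 'n"
    and x :: "nat \<Rightarrow> real ^ 'n"
    and fstar \<alpha> L :: real
  assumes grad: "\<And>y. (f has_derivative (\<lambda>h. g y \<bullet> h)) (at y)"
    and fstar_min: "\<And>y. fstar \<le> f y"
    and fstar_attained: "\<exists>xs. f xs = fstar"
    and L_pos: "L > 0"
    and smooth: "\<And>y z. norm1 (g y - g z) \<le> L * norminf (y - z)"
    and alpha_pos: "\<alpha> > 0"
    and alpha_lt: "\<alpha> < 2 / L"
    and iter: "\<And>k. x (Suc k) = x k - (\<alpha> * norm1 (g (x k))) *\<^sub>R sgnv (g (x k))"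
  shows
    "(\<forall>\<mu>::real. \<mu> > 0 \<longrightarrow>
        (\<forall>y z. f y - f z \<ge> g z \<bullet> (y - z) + \<mu> / 2 * (norminf (y - z))\<^sup>2) \<longrightarrow>
        (let \<zeta> = 1 - 2 * \<mu> * \<alpha> * (1 - L * \<alpha> / 2) in
          0 \<le> \<zeta> \<and> \<zeta> < 1 \<and>
          (\<forall>k. f (x k) - fstar \<le> \<zeta> ^ k * (f (x 0) - fstar))))
   \<and> (\<forall>\<mu>::real. \<mu> > 0 \<longrightarrow>
        (\<forall>y. (norm1 (g y))\<^sup>2 \<ge> 2 * \<mu> * (f y - fstar)) \<longrightarrow>
        (let \<zeta> = 1 - 2 * \<mu> * \<alpha> * (1 - L * \<alpha> / 2) in
          \<zeta> < 1 \<and>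
          (\<forall>k. f (x k) - fstar \<le> \<zeta> ^ k * (f (x 0) - fstar))))
   \<and> (let \<gamma> = \<alpha> * (1 - L * \<alpha> / 2) in
        \<forall>k. Min ((\<lambda>l. (norm1 (g (x l)))\<^sup>2) ` {0..k})
              \<le> (f (x 0) - fstar) / (\<gamma> * real (k + 1)))"
proof -
  interpret linf_smooth f g L
    using grad L_pos smooth by unfold_locales auto
  define \<gamma> where "\<gamma> = \<alpha> * (1 - L * \<alpha> / 2)"
  have \<gamma>_pos: "\<gamma> > 0"
    unfolding \<gamma>_def using step_factor_pos L_pos alpha_pos alpha_lt .
  have decrease: "f (x (Suc k)) \<le> f (x k) - \<gamma> * (norm1 (g (x k)))\<^sup>2" for k
    unfolding iter \<gamma>_def by (rule sign_step_decrease)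
  have PL_rate: "f (x k) - fstar \<le> (1 - 2 * \<mu> * \<alpha> * (1 - L * \<alpha> / 2)) ^ k * (f (x 0) - fstar)"
    if PL: "\<forall>y. (norm1 (g y))\<^sup>2 \<ge> 2 * \<mu> * (f y - fstar)" for \<mu> k
  proof (rule nonneg_contraction_bound)
    show "f (x (Suc k)) - fstar \<le> (1 - 2 * \<mu> * \<alpha> * (1 - L * \<alpha> / 2)) * (f (x k) - fstar)" for k
      using decrease[of k] mult_left_mono[OF PL[rule_format, of "x k"] less_imp_le[OF \<gamma>_pos]]
      by (simp add: \<gamma>_def algebra_simps)
  qed (use fstar_min in simp)
  have \<zeta>_lt_1: "1 - 2 * \<mu> * \<alpha> * (1 - L * \<alpha> / 2) < 1" if "\<mu> > 0" for \<mu>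
    using that \<gamma>_pos by (simp add: \<gamma>_def mult.assoc)
  obtain xs where xs: "f xs = fstar"
    using fstar_attained by blast
  have SC_imp_PL: "\<forall>y. (norm1 (g y))\<^sup>2 \<ge> 2 * \<mu> * (f y - fstar)"
    if "\<mu> > 0" and SC: "\<forall>y z. f y - f z \<ge> g z \<bullet> (y - z) + \<mu> / 2 * (norminf (y - z))\<^sup>2" for \<mu>
    using strong_convexity_imp_PL[OF SC \<open>\<mu> > 0\<close> xs] by blast
  have SC_factor_nonneg: "0 \<le> 1 - 2 * \<mu> * \<alpha> * (1 - L * \<alpha> / 2)"
    if "\<mu> > 0" and SC: "\<forall>y z. f y - f z \<ge> g z \<bullet> (y - z) + \<mu> / 2 * (norminf (y - z))\<^sup>2" for \<mu>
    using contraction_factor_nonneg strong_convexity_modulus_le[OF SC] that by simp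
  have min_gradient: "Min ((\<lambda>l. (norm1 (g (x l)))\<^sup>2) ` {0..k}) \<le> (f (x 0) - fstar) / (\<gamma> * real (k + 1))" for k
    by (rule Min_le_of_sufficient_decrease[where a = "\<lambda>k. f (x k)", OF decrease fstar_min \<gamma>_pos])
  show ?thesis
    unfolding Let_def \<gamma>_def[symmetric]
    using PL_rate \<zeta>_lt_1 SC_imp_PL SC_factor_nonneg min_gradient by blast
qed

end
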